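(* Let $R$ be a unique factorization domain. Let $n,m\geqslant 1$, $s_1,\dots,s_n\in(\operatorname{Sqf} R)\setminus R^{\ast}$ and $t_1,\dots,t_m\in(\operatorname{Sqf} R)\setminus R^{\ast}$, integers $k_1,\dots,k_n\geqslant 1$ and $l_1,\dots,l_m\geqslant 1$, and $c,d\in R^{\ast}$, such that $s_i\mid s_{i+1}$ and $s_i\not\sim s_{i+1}$ for $i=1,\dots,n-1$, and $t_i\mid t_{i+1}$ and $t_i\not\sim t_{i+1}$ for $i=1,\dots,m-1$. If $$c\,s_1^{k_1}s_2^{k_2}\cdots s_n^{k_n}=d\,t_1^{l_1}t_2^{l_2}\cdots t_m^{l_m},$$ then $n=m$, and $s_i\sim t_i$ and $k_i=l_i$ for $i=1,\dots,n$.
   Context: $R^{\ast}$ denotes the set of invertible elements of $R$; $a\sim b$ means $a$ and $b$ are associated; $a\mid b$ means $a$ divides $b$. An element $a\in R$ is square-free if it cannot be written as $a=b^2c$ with $b\in R\setminus R^{\ast}$ and $c\in R$; $\operatorname{Sqf} R$ denotes the set of square-free elements of $R$. *)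

theory Defs
  imports "HOL-Computational_Algebra.Factorial_Ring"
begin

definition sqf :: "'a::comm_semiring_1 \<Rightarrow> bool" where
  "sqf a \<longleftrightarrow> \<not> (\<exists>b c. \<not> b dvd 1 \<and> a = b^2 * c)"

definition assoc :: "'a::comm_semiring_1 \<Rightarrow> 'a \<Rightarrow> bool" where
  "assoc a b \<longleftrightarrow> a dvd b \<and> b dvd a"

end

theory Submission
  imports Defs
begin

text \<open>For a prime \<open>p\<close>, the divisibility chain makes \<open>{i. p dvd s i}\<close> a final segment
\<open>{j..n}\<close> of the indices, and square-freeness makes each \<open>s i\<close> contribute multiplicity
\<open>k i\<close> or \<open>0\<close>. Hence the nonzero multiplicities of primes in the product are exactly the
tail sums \<open>k j + \<dots> + k n\<close>, every one of them attained because \<open>s j\<close> has a prime divisor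
not dividing \<open>s (j - 1)\<close>. These tail sums strictly decrease, so both sides of the equation
yield the same decreasing sequence: the lengths, the tail sums and hence the exponents agree.
Finally \<open>p dvd s i\<close> holds iff the multiplicity of \<open>p\<close> reaches the \<open>i\<close>-th tail sum, so
\<open>s i\<close> and \<open>t i\<close> have the same prime divisors and, being square-free, are associated.\<close>

lemma sqf_nonzero: "sqf (x::'a::factorial_semiring) \<Longrightarrow> x \<noteq> 0"
  unfolding sqf_def by (metis mult_zero_right not_is_unit_0)

lemma multiplicity_sqf:
  fixes x p :: "'a::factorial_semiring"
  assumes "sqf x" "prime p"
  shows "multiplicity p x = (if p dvd x then 1 else 0)"
proof -
  have "multiplicity p x \<le> 1"
  proof (rule ccontr)
    assume "\<not> multiplicity p x \<le> 1"
    then have "p ^ 2 dvd x" by (intro multiplicity_dvd') simp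
    then obtain c where "x = p ^ 2 * c" by (elim dvdE)
    with assms show False unfolding sqf_def by (metis not_prime_unit)
  qed
  moreover have "p dvd x \<longleftrightarrow> multiplicity p x > 0"
    using prime_multiplicity_gt_zero_iff[of p x] assms sqf_nonzero by auto
  ultimately show ?thesis by auto
qed

lemma sqf_dvd_if_prime_divisors_dvd:
  fixes x y :: "'a::factorial_semiring"
  assumes "sqf x" "sqf y" "\<And>p. prime p \<Longrightarrow> p dvd x \<Longrightarrow> p dvd y"
  shows "x dvd y"
  using assms by (intro multiplicity_le_imp_dvd sqf_nonzero) (auto simp: multiplicity_sqf)

lemma sqf_assoc_iff_same_prime_divisors:
  fixes x y :: "'a::factorial_semiring"
  assumes "sqf x" "sqf y"
  shows "assoc x y \<longleftrightarrow> (\<forall>p. prime p \<longrightarrow> p dvd x \<longleftrightarrow> p dvd y)"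
  using assms sqf_dvd_if_prime_divisors_dvd dvd_trans unfolding assoc_def by metis

lemma sorted_wrt_rev_map_upt:
  fixes f :: "nat \<Rightarrow> 'a::linorder"
  assumes "\<forall>i\<in>{1..<n}. f (Suc i) < f i"
  shows "sorted_wrt (<) (rev (map f [1..<Suc n]))"
  unfolding sorted_wrt_rev sorted_wrt_map
  using assms by (subst sorted_wrt_iff_nth_Suc_transp) (auto simp: transp_def simp del: upt_Suc)

lemma decreasing_eq_if_image_eq:
  fixes f g :: "nat \<Rightarrow> 'a::linorder"
  assumes "\<forall>i\<in>{1..<n}. f (Suc i) < f i" and "\<forall>i\<in>{1..<m}. g (Suc i) < g i"
    and "f ` {1..n} = g ` {1..m}"
  shows "n = m \<and> (\<forall>i\<in>{1..n}. f i = g i)"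
proof -
  have "set (rev (map f [1..<Suc n])) = set (rev (map g [1..<Suc m]))"
    using assms(3) by (simp add: atLeastLessThanSuc_atLeastAtMost del: upt_Suc)
  then have "rev (map f [1..<Suc n]) = rev (map g [1..<Suc m])"
    using assms(1,2) by (intro strict_sorted_equal sorted_wrt_rev_map_upt)
  then have eq: "map f [1..<Suc n] = map g [1..<Suc m]" by simp
  then have "n = m" by (metis length_map length_upt diff_Suc_1)
  moreover have "f i = g i" if "i \<in> {1..n}" for i
    using arg_cong[OF eq, of "\<lambda>xs. xs ! (i - 1)"] that \<open>n = m\<close> by (auto simp del: upt_Suc)
  ultimately show ?thesis by blast
qed

locale sqf_chain =
  fixes s :: "nat \<Rightarrow> 'a::factorial_semiring" and k :: "nat \<Rightarrow> nat" and n :: nat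
  assumes sqf_nonunit: "\<forall>i\<in>{1..n}. sqf (s i) \<and> \<not> is_unit (s i)"
    and exponent_pos: "\<forall>i\<in>{1..n}. k i \<ge> 1"
    and strict_chain: "\<forall>i\<in>{1..n-1}. s i dvd s (i+1) \<and> \<not> assoc (s i) (s (i+1))"
begin

abbreviation chain_prod :: 'a where
  "chain_prod \<equiv> \<Prod>i=1..n. s i ^ k i"

definition tail :: "nat \<Rightarrow> nat" where
  "tail j = (\<Sum>i=j..n. k i)"

lemma tail_Suc_last: "tail (Suc n) = 0"
  unfolding tail_def by simp

lemma tail_Suc_less: "i \<in> {1..n} \<Longrightarrow> tail (Suc i) < tail i"
  using exponent_pos unfolding tail_def by (subst (2) sum.atLeast_Suc_atMost) force+

lemma exponent_eq_tail_diff: "i \<in> {1..n} \<Longrightarrow> k i = tail i - tail (Suc i)"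
  unfolding tail_def by (subst sum.atLeast_Suc_atMost) auto

lemma dvd_chain_mono:
  assumes "p dvd s i" "1 \<le> i" "i \<le> j" "j \<le> n"
  shows "p dvd s j"
  using assms(3,4)
proof (induction j rule: dec_induct)
  case (step j)
  with assms(2) strict_chain have "s j dvd s (Suc j)" by auto
  with step show ?case by (auto intro: dvd_trans)
qed (use assms(1) in simp)

lemma multiplicity_prod:
  assumes "prime p"
  shows "multiplicity p chain_prod = sum k {i\<in>{1..n}. p dvd s i}"
proof -
  have nonzero: "s i \<noteq> 0" if "i \<in> {1..n}" for i
    using sqf_nonunit sqf_nonzero that by blast
  have "multiplicity p chain_prod = (\<Sum>i=1..n. multiplicity p (s i ^ k i))"
    using assms nonzero by (intro prime_elem_multiplicity_prod_distrib) auto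
  also have "\<dots> = (\<Sum>i=1..n. k i * multiplicity p (s i))"
    using assms nonzero by (intro sum.cong prime_elem_multiplicity_power_distrib) auto
  also have "\<dots> = (\<Sum>i=1..n. if p dvd s i then k i else 0)"
    using assms sqf_nonunit by (intro sum.cong) (auto simp: multiplicity_sqf)
  also have "\<dots> = sum k {i\<in>{1..n}. p dvd s i}"
    by (rule sum.inter_filter[symmetric]) simp
  finally show ?thesis .
qed

lemma prime_divisor_indices:
  assumes "p dvd s i" "i \<in> {1..n}" "i = 1 \<or> \<not> p dvd s (i - 1)"
  shows "{j\<in>{1..n}. p dvd s j} = {i..n}"
proof -
  have "\<not> p dvd s j" if "1 \<le> j" "j < i" for j
  proof
    assume "p dvd s j"
    moreover have "j \<le> i - 1" "i - 1 \<le> n" using that assms(2) by auto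
    ultimately have "p dvd s (i - 1)" using dvd_chain_mono that(1) by blast
    with assms(3) that show False by auto
  qed
  then show ?thesis
    using assms(1,2) dvd_chain_mono[OF assms(1)] by (auto simp: not_less[symmetric])
qed

lemma prime_dvd_iff_tail_le_multiplicity:
  assumes "prime p" "i \<in> {1..n}"
  shows "p dvd s i \<longleftrightarrow> tail i \<le> multiplicity p chain_prod"
proof (cases "p dvd s i")
  case True
  then have "{i..n} \<subseteq> {j\<in>{1..n}. p dvd s j}"
    using dvd_chain_mono[of p i] assms(2) by auto
  then have "tail i \<le> multiplicity p chain_prod"
    unfolding multiplicity_prod[OF assms(1)] tail_def by (intro sum_mono2) auto
  with True show ?thesis by simp
next
  case False
  have "{j\<in>{1..n}. p dvd s j} \<subseteq> {Suc i..n}"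
  proof
    fix j assume j: "j \<in> {j\<in>{1..n}. p dvd s j}"
    with dvd_chain_mono[of p j i] assms(2) False have "\<not> j \<le> i" by auto
    with j show "j \<in> {Suc i..n}" by auto
  qed
  then have "multiplicity p chain_prod \<le> tail (Suc i)"
    unfolding multiplicity_prod[OF assms(1)] tail_def by (intro sum_mono2) auto
  with False tail_Suc_less[OF assms(2)] show ?thesis by simp
qed

lemma obtain_prime_dvd_not_dvd_pred:
  assumes "i \<in> {1..n}"
  obtains p where "prime p" "p dvd s i" "i = 1 \<or> \<not> p dvd s (i - 1)"
proof (cases "i = 1")
  case True
  have "sqf (s i)" "\<not> is_unit (s i)" using sqf_nonunit assms by auto
  then obtain p where "p dvd s i" "prime p" using prime_divisor_exists sqf_nonzero by blast
  with True that show ?thesis by blast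
next
  case False
  then have pred: "i - 1 \<in> {1..n-1}" "i - 1 + 1 = i" using assms by auto
  with bspec[OF strict_chain pred(1)] have "s (i - 1) dvd s i" "\<not> assoc (s (i - 1)) (s i)"
    by simp_all
  then have "\<not> s i dvd s (i - 1)" by (auto simp: assoc_def)
  moreover have "sqf (s i)" "sqf (s (i - 1))"
    using bspec[OF sqf_nonunit, of i] bspec[OF sqf_nonunit, of "i - 1"] assms pred(1) by auto
  ultimately obtain p where "prime p" "p dvd s i" "\<not> p dvd s (i - 1)"
    using sqf_dvd_if_prime_divisors_dvd by blast
  with that show ?thesis by blast
qed

lemma multiplicity_values:
  "{multiplicity p chain_prod | p. prime p \<and> multiplicity p chain_prod \<noteq> 0} = tail ` {1..n}"
proof (intro equalityI subsetI)
  fix x assume "x \<in> {multiplicity p chain_prod | p. prime p \<and> multiplicity p chain_prod \<noteq> 0}"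
  then obtain p where p: "prime p" "multiplicity p chain_prod \<noteq> 0" and x: "x = multiplicity p chain_prod"
    by blast
  let ?I = "{j\<in>{1..n}. p dvd s j}"
  have "?I \<noteq> {}"
  proof
    assume "?I = {}"
    with multiplicity_prod[OF p(1)] have "multiplicity p chain_prod = 0" by (simp only: sum.empty)
    with p(2) show False ..
  qed
  then have "Min ?I \<in> ?I" by (intro Min_in) simp_all
  have min: "Min ?I \<le> j" if "j \<in> ?I" for j using that by (intro Min_le) simp_all
  have "Min ?I = 1 \<or> \<not> p dvd s (Min ?I - 1)"
  proof (rule ccontr)
    assume "\<not> ?thesis"
    with \<open>Min ?I \<in> ?I\<close> have "Min ?I - 1 \<in> ?I" by auto
    from min[OF this] \<open>\<not> ?thesis\<close> \<open>Min ?I \<in> ?I\<close> show False by auto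
  qed
  with \<open>Min ?I \<in> ?I\<close> have "?I = {Min ?I..n}"
    by (intro prime_divisor_indices) auto
  then have "x = tail (Min ?I)"
    using x multiplicity_prod[OF p(1)] unfolding tail_def by simp
  with \<open>Min ?I \<in> ?I\<close> show "x \<in> tail ` {1..n}" by blast
next
  fix x assume "x \<in> tail ` {1..n}"
  then obtain i where i: "i \<in> {1..n}" and x: "x = tail i" by blast
  obtain p where p: "prime p" "p dvd s i" "i = 1 \<or> \<not> p dvd s (i - 1)"
    using obtain_prime_dvd_not_dvd_pred[OF i] .
  have "multiplicity p chain_prod = tail i"
    using multiplicity_prod[OF p(1)] prime_divisor_indices[OF p(2) i p(3)] unfolding tail_def by simp
  moreover have "tail i \<noteq> 0" using tail_Suc_less[OF i] by simp
  ultimately show "x \<in> {multiplicity p chain_prod | p. prime p \<and> multiplicity p chain_prod \<noteq> 0}"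
    using p(1) unfolding x by (intro CollectI exI[of _ p]) simp
qed

end

theorem proposition2:
  fixes s t :: "nat \<Rightarrow> 'a::{factorial_semiring, idom}"
    and k l :: "nat \<Rightarrow> nat"
    and n m :: nat
    and c d :: 'a
  assumes "n \<ge> 1" and "m \<ge> 1"
    and "\<forall>i\<in>{1..n}. sqf (s i) \<and> \<not> is_unit (s i)"
    and "\<forall>i\<in>{1..m}. sqf (t i) \<and> \<not> is_unit (t i)"
    and "\<forall>i\<in>{1..n}. k i \<ge> 1"
    and "\<forall>i\<in>{1..m}. l i \<ge> 1"
    and "is_unit c" and "is_unit d"
    and "\<forall>i\<in>{1..n-1}. s i dvd s (i+1) \<and> \<not> assoc (s i) (s (i+1))"
    and "\<forall>i\<in>{1..m-1}. t i dvd t (i+1) \<and> \<not> assoc (t i) (t (i+1))"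
    and "c * (\<Prod>i=1..n. s i ^ k i) = d * (\<Prod>i=1..m. t i ^ l i)"
  shows "n = m \<and> (\<forall>i\<in>{1..n}. assoc (s i) (t i) \<and> k i = l i)"
proof -
  interpret S: sqf_chain s k n using assms(3,5,9) by unfold_locales
  interpret T: sqf_chain t l m using assms(4,6,10) by unfold_locales
  have mult_eq: "multiplicity p S.chain_prod = multiplicity p T.chain_prod" for p
  proof -
    have "multiplicity p S.chain_prod = multiplicity p (c * S.chain_prod)"
      using multiplicity_times_unit_right[OF assms(7)] by simp
    also have "\<dots> = multiplicity p (d * T.chain_prod)" using assms(11) by simp
    also have "\<dots> = multiplicity p T.chain_prod"
      using multiplicity_times_unit_right[OF assms(8)] by simp
    finally show ?thesis .
  qed
  have "S.tail ` {1..n} = T.tail ` {1..m}"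
    using S.multiplicity_values T.multiplicity_values mult_eq by simp
  then have "n = m \<and> (\<forall>i\<in>{1..n}. S.tail i = T.tail i)"
    by (intro decreasing_eq_if_image_eq) (auto intro: S.tail_Suc_less T.tail_Suc_less)
  then have nm: "n = m" and tails: "\<forall>i\<in>{1..n}. S.tail i = T.tail i" by blast+
  have "assoc (s i) (t i) \<and> k i = l i" if i: "i \<in> {1..n}" for i
  proof
    have "S.tail (Suc i) = T.tail (Suc i)"
    proof (cases "i = n")
      case True
      then show ?thesis using nm S.tail_Suc_last T.tail_Suc_last by simp
    next
      case False
      with i tails show ?thesis by simp
    qed
    moreover have "S.tail i = T.tail i" using i tails by blast
    ultimately show "k i = l i"
      using S.exponent_eq_tail_diff[OF i] T.exponent_eq_tail_diff i nm by simp
    have "p dvd s i \<longleftrightarrow> p dvd t i" if "prime p" for p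
      using S.prime_dvd_iff_tail_le_multiplicity[OF that i]
        T.prime_dvd_iff_tail_le_multiplicity[OF that, of i] i nm tails mult_eq by simp
    moreover have "sqf (s i)" "sqf (t i)" using assms(3,4) i nm by auto
    ultimately show "assoc (s i) (t i)" by (simp add: sqf_assoc_iff_same_prime_divisors)
  qed
  with nm show ?thesis by blast
qed

end
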